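(* Let $\ell,n\in\mathbb{N}$, let $a_1<\dots<a_\ell$ be points of an open interval $I$, and let $n_1,\dots,n_\ell\in\mathbb{N}$ with $n_1+\dots+n_\ell=n$. Then for all $f\in\mathscr{C}^n(I)$ and $x\in I$, \[ f(x)=\sum_{\alpha=1}^\ell\sum_{\beta=0}^{n_\alpha-1}\bigg(f^{(\beta)}(a_\alpha)+\int_{a_\alpha}^x f^{(n)}(t)\,\frac{(a_\alpha-t)^{n-1-\beta}}{(n-1-\beta)!}\,dt\bigg)H_{\alpha,\beta}(x). \]
   Context: $\mathscr{C}^n(I)$ denotes the space of $n$ times continuously differentiable complex-valued functions on $I$. Let $\omega(x):=\prod_{i=1}^\ell(x-a_i)^{n_i}$. For $\alpha\in\{1,\dots,\ell\}$, $\beta\in\{0,\dots,n_\alpha-1\}$, the polynomial $H_{\alpha,\beta}$ is \[ H_{\alpha,\beta}(x):=\sum_{k=0}^{n_\alpha-1-\beta}\frac{\omega(x)}{\beta!\,k!\,(x-a_\alpha)^{n_\alpha-\beta-k}}\,g_\alpha^{(k)}(a_\alpha),\qquad g_\alpha(x):=\frac{(x-a_\alpha)^{n_\alpha}}{\omega(x)}=\prod_{i\ne\alpha}(x-a_i)^{-n_i}. \] (Equivalently, $H_{\alpha,\beta}$ is the unique polynomial of degree at most $n-1$ with $H_{\alpha,\beta}^{(j)}(a_i)=\delta_{i,\alpha}\delta_{j,\beta}$ for all $i\in\{1,\dots,\ell\}$, $j\in\{0,\dots,n_i-1\}$.) *)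

theory Defs
  imports "HOL-Analysis.Analysis"
begin

fun nderiv :: "nat \<Rightarrow> (real \<Rightarrow> 'a::real_normed_vector) \<Rightarrow> real \<Rightarrow> 'a" where
  "nderiv 0 f = f"
| "nderiv (Suc k) f = (\<lambda>x. vector_derivative (nderiv k f) (at x))"

definition Cn :: "nat \<Rightarrow> real set \<Rightarrow> (real \<Rightarrow> complex) \<Rightarrow> bool" where
  "Cn n I f \<longleftrightarrow>
     (\<forall>k<n. \<forall>x\<in>I. nderiv k f differentiable (at x)) \<and>
     (\<forall>k\<le>n. continuous_on I (nderiv k f))"

definition oint :: "real \<Rightarrow> real \<Rightarrow> (real \<Rightarrow> complex) \<Rightarrow> complex" where
  "oint a b g = (if a \<le> b then integral {a..b} g else - integral {b..a} g)"

definition gfun :: "nat \<Rightarrow> (nat \<Rightarrow> real) \<Rightarrow> (nat \<Rightarrow> nat) \<Rightarrow> nat \<Rightarrow> real \<Rightarrow> real" where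
  "gfun l a m \<alpha> x = (\<Prod>i\<in>{1..l}-{\<alpha>}. inverse ((x - a i) ^ m i))"

text \<open>H_{alpha,beta}(x); the quotient omega(x)/(x-a_alpha)^(n_alpha-beta-k) is written
  out as the polynomial (x-a_alpha)^(beta+k) * prod_{i ~= alpha} (x-a_i)^(n_i).\<close>
definition Hpoly :: "nat \<Rightarrow> (nat \<Rightarrow> real) \<Rightarrow> (nat \<Rightarrow> nat) \<Rightarrow> nat \<Rightarrow> nat \<Rightarrow> real \<Rightarrow> real" where
  "Hpoly l a m \<alpha> \<beta> x =
     (\<Sum>k=0..m \<alpha> - 1 - \<beta>.
        ((x - a \<alpha>) ^ (\<beta> + k) * (\<Prod>i\<in>{1..l}-{\<alpha>}. (x - a i) ^ m i))
        / (fact \<beta> * fact k) * nderiv k (gfun l a m \<alpha>) (a \<alpha>))"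

end

theory Submission
  imports Defs "HOL-Computational_Algebra.Polynomial"
begin

text \<open>Taylor's formula with integral remainder around \<open>x\<close>, applied to \<open>f^(\<beta>)\<close> and evaluated at
  \<open>a\<^sub>\<alpha>\<close>, turns each bracket into \<open>\<Sum>\<^sub>j\<^sub><\<^sub>n f^(j)(x)/j! \<cdot> (d/dt)\<^sup>\<beta> (t - x)\<^sup>j\<close> at \<open>t = a\<^sub>\<alpha>\<close>.
  Hermite interpolation is exact on polynomials of degree \<open>< n\<close>, so pairing these data with the
  \<open>H\<^sub>\<alpha>\<^sub>,\<^sub>\<beta>(x)\<close> gives back \<open>(t - x)\<^sup>j\<close> at \<open>t = x\<close>, i.e. \<open>[j = 0]\<close>, and only \<open>f(x)\<close> survives.
  Exactness rests on the Kronecker property of the \<open>H\<^sub>\<alpha>\<^sub>,\<^sub>\<beta>\<close> and on the fact that a polynomial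
  of degree \<open>< n\<close> whose derivatives of order \<open>< n\<^sub>i\<close> vanish at every \<open>a\<^sub>i\<close> is divisible by
  \<open>\<omega>\<close>, hence zero.\<close>

subsection \<open>Higher derivatives of polynomials\<close>

lemma higher_pderiv_diff:
  "(pderiv ^^ n) (p - q) = (pderiv ^^ n) p - (pderiv ^^ n) (q :: 'a::idom poly)"
  by (induction n arbitrary: p q) (simp_all del: funpow.simps add: funpow_Suc_right pderiv_diff)

lemma higher_pderiv_1: "(pderiv ^^ n) 1 = (if n = 0 then 1 else 0)"
  by (induction n) (simp_all add: pderiv_1)

lemma poly_higher_pderiv_linear_power:
  fixes c y :: "'a::field_char_0"
  shows "poly ((pderiv ^^ j) ([:-c, 1:] ^ k)) y =
           (if j \<le> k then fact k / fact (k - j) * (y - c) ^ (k - j) else 0)"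
proof (induction j arbitrary: k)
  case 0
  then show ?case by (simp add: poly_power)
next
  case (Suc j)
  show ?case
  proof (cases k)
    case 0
    then show ?thesis by (simp del: funpow.simps add: funpow_Suc_right pderiv_1)
  next
    case (Suc k')
    have "pderiv ([:-c, 1:] ^ k) = smult (of_nat k) ([:-c, 1:] ^ k')"
      unfolding Suc pderiv_power_Suc by (simp add: pderiv_pCons)
    then have "(pderiv ^^ Suc j) ([:-c, 1:] ^ k) = smult (of_nat k) ((pderiv ^^ j) ([:-c, 1:] ^ k'))"
      by (simp del: funpow.simps add: funpow_Suc_right higher_pderiv_smult)
    then show ?thesis
      using Suc.IH[of k'] \<open>k = Suc k'\<close> by (auto simp del: funpow.simps simp: fact_Suc)
  qed
qed

lemma poly_higher_pderiv_eq_0_if_linear_power_dvd: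
  fixes p :: "'a::idom poly"
  assumes "[:-c, 1:] ^ k dvd p" "j < k"
  shows "poly ((pderiv ^^ j) p) c = 0"
  using assms
proof (induction k arbitrary: p j)
  case 0
  then show ?case by simp
next
  case (Suc k)
  from Suc.prems(1) obtain r where r: "p = [:-c, 1:] ^ Suc k * r" by (rule dvdE)
  show ?case
  proof (cases j)
    case 0
    then show ?thesis using r by (simp add: poly_power)
  next
    case (Suc j')
    have "pderiv p = [:-c, 1:] ^ k * ([:-c, 1:] * pderiv r + smult (of_nat (Suc k)) r)"
      unfolding r pderiv_mult pderiv_power_Suc by (simp add: algebra_simps pderiv_pCons)
    then have "[:-c, 1:] ^ k dvd pderiv p" by simp
    then show ?thesis
      using Suc.IH[of "pderiv p" j'] Suc.prems \<open>j = Suc j'\<close>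
      by (simp del: funpow.simps add: funpow_Suc_right)
  qed
qed

lemma linear_power_dvd_if_poly_higher_pderiv_eq_0:
  fixes p :: "'a::{idom,semiring_char_0} poly"
  assumes "\<And>j. j < k \<Longrightarrow> poly ((pderiv ^^ j) p) c = 0"
  shows "[:-c, 1:] ^ k dvd p"
  using assms
proof (induction k arbitrary: p)
  case 0
  then show ?case by simp
next
  case (Suc k)
  have IH: "[:-c, 1:] ^ k dvd pderiv p"
    using Suc.IH[of "pderiv p"] Suc.prems[of "Suc _"]
    by (simp del: funpow.simps add: funpow_Suc_right)
  have root: "poly p c = 0" using Suc.prems[of 0] by simp
  show ?case
  proof (cases "p = 0 \<or> pderiv p = 0")
    case True
    then show ?thesis using root pderiv_iszero[of p] by auto
  next
    case False
    then have "k \<le> order c (pderiv p)" using IH order_divides by blast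
    moreover have "order c p = Suc (order c (pderiv p))" using False root by (simp add: order_pderiv)
    ultimately show ?thesis using order_divides by (metis Suc_le_mono)
  qed
qed

lemma prod_linear_powers_dvd_if_poly_higher_pderiv_eq_0:
  fixes p :: "'a::{idom,semiring_char_0} poly"
  assumes "finite S" "inj_on a S"
    and "\<And>i j. i \<in> S \<Longrightarrow> j < k i \<Longrightarrow> poly ((pderiv ^^ j) p) (a i) = 0"
  shows "(\<Prod>i\<in>S. [:-a i, 1:] ^ k i) dvd p"
  using assms
proof (induction S rule: finite_induct)
  case empty
  then show ?case by simp
next
  case (insert i S)
  show ?case
  proof (cases "p = 0")
    case False
    have "(\<Prod>i\<in>S. [:-a i, 1:] ^ k i) dvd p" using insert by auto
    then obtain r where r: "p = (\<Prod>i\<in>S. [:-a i, 1:] ^ k i) * r" by (rule dvdE)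
    have "poly (\<Prod>i\<in>S. [:-a i, 1:] ^ k i) (a i) \<noteq> 0"
      using insert by (auto simp: poly_prod poly_power)
    then have order_prod: "order (a i) (\<Prod>i\<in>S. [:-a i, 1:] ^ k i) = 0" by (simp add: order_root)
    have "[:-a i, 1:] ^ k i dvd p"
      by (rule linear_power_dvd_if_poly_higher_pderiv_eq_0) (use insert.prems in auto)
    then have "k i \<le> order (a i) p" using False order_divides by blast
    also have "order (a i) p = order (a i) r"
      using False unfolding r by (simp add: order_mult order_prod)
    finally have "[:-a i, 1:] ^ k i dvd r" using order_divides by blast
    then show ?thesis unfolding r using insert.hyps by (simp add: mult_dvd_mono mult.commute)
  qed simp
qed

lemma eq_0_if_poly_higher_pderiv_eq_0:
  fixes p :: "'a::{idom,semiring_char_0} poly"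
  assumes "finite S" "inj_on a S"
    and "\<And>i j. i \<in> S \<Longrightarrow> j < k i \<Longrightarrow> poly ((pderiv ^^ j) p) (a i) = 0"
    and "degree p < (\<Sum>i\<in>S. k i)"
  shows "p = 0"
proof (rule ccontr)
  assume "p \<noteq> 0"
  then have "degree (\<Prod>i\<in>S. [:-a i, 1:] ^ k i) \<le> degree p"
    by (intro dvd_imp_degree_le prod_linear_powers_dvd_if_poly_higher_pderiv_eq_0 assms)
  moreover have "degree (\<Prod>i\<in>S. [:-a i, 1:] ^ k i) = (\<Sum>i\<in>S. k i)"
    by (subst degree_prod_sum_eq) (auto simp: degree_linear_power)
  ultimately show False using assms(4) by simp
qed

subsection \<open>Iterated derivatives\<close>

lemma nderiv_cong_open:
  assumes "open U" "\<And>z. z \<in> U \<Longrightarrow> f z = g z" "y \<in> U"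
  shows "nderiv k f y = nderiv k g y"
  using assms(3)
proof (induction k arbitrary: y)
  case 0
  then show ?case using assms by simp
next
  case (Suc k)
  have "(nderiv k f has_vector_derivative D) (at y) \<longleftrightarrow> (nderiv k g has_vector_derivative D) (at y)" for D
    using has_vector_derivative_transform_within_open[OF _ assms(1) Suc.prems] Suc.IH by metis
  then show ?case by (simp add: vector_derivative_def)
qed

lemma nderiv_const: "nderiv k (\<lambda>_. c) = (\<lambda>_. if k = 0 then c else 0)"
  by (induction k) auto

lemma nderiv_poly: "nderiv k (poly p) = poly ((pderiv ^^ k) p)"
proof (induction k)
  case (Suc k)
  show ?case
    by (rule ext, simp add: Suc, rule vector_derivative_at)
       (simp add: has_real_derivative_iff_has_vector_derivative[symmetric])
qed simp

lemma sum_binomial_Suc: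
  fixes t :: "nat \<Rightarrow> 'a::comm_semiring_1"
  shows "(\<Sum>i\<le>Suc n. of_nat (Suc n choose i) * t i) =
           (\<Sum>i\<le>n. of_nat (n choose i) * t (Suc i)) + (\<Sum>i\<le>n. of_nat (n choose i) * t i)"
proof -
  have "(\<Sum>i\<le>n. of_nat (n choose i) * t i) = (\<Sum>i\<le>Suc n. of_nat (n choose i) * t i)"
    by (simp add: binomial_eq_0)
  also have "\<dots> = t 0 + (\<Sum>i\<le>n. of_nat (n choose Suc i) * t (Suc i))"
    by (subst sum.atMost_Suc_shift) simp
  finally show ?thesis
    by (subst sum.atMost_Suc_shift) (simp add: algebra_simps sum.distrib)
qed

lemma nderiv_mult:
  fixes f g :: "real \<Rightarrow> real"
  assumes U: "open U"
    and f: "\<And>k y. y \<in> U \<Longrightarrow> (nderiv k f has_real_derivative nderiv (Suc k) f y) (at y)"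
    and g: "\<And>k y. y \<in> U \<Longrightarrow> (nderiv k g has_real_derivative nderiv (Suc k) g y) (at y)"
    and y: "y \<in> U"
  shows "nderiv n (\<lambda>w. f w * g w) y = (\<Sum>i\<le>n. of_nat (n choose i) * nderiv i f y * nderiv (n - i) g y)"
  using y
proof (induction n arbitrary: y)
  case 0
  then show ?case by simp
next
  case (Suc n z)
  let ?L = "\<lambda>n w. \<Sum>i\<le>n. of_nat (n choose i) * nderiv i f w * nderiv (n - i) g w"
  have "(?L n has_real_derivative
      (\<Sum>i\<le>n. of_nat (n choose i) * nderiv (Suc i) f z * nderiv (n - i) g z
         + nderiv (Suc (n - i)) g z * (of_nat (n choose i) * nderiv i f z))) (at z)"
    by (intro DERIV_sum DERIV_mult DERIV_cmult f g Suc.prems)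
  also have "(\<Sum>i\<le>n. of_nat (n choose i) * nderiv (Suc i) f z * nderiv (n - i) g z
         + nderiv (Suc (n - i)) g z * (of_nat (n choose i) * nderiv i f z)) = ?L (Suc n) z"
    using sum_binomial_Suc[of n "\<lambda>i. nderiv i f z * nderiv (Suc n - i) g z"]
    by (simp del: nderiv.simps add: sum.distrib algebra_simps Suc_diff_le)
  finally have "(nderiv n (\<lambda>w. f w * g w) has_real_derivative ?L (Suc n) z) (at z)"
    using has_field_derivative_transform_within_open[OF _ U Suc.prems] Suc.IH by simp
  then have "vector_derivative (nderiv n (\<lambda>w. f w * g w)) (at z) = ?L (Suc n) z"
    by (simp add: vector_derivative_at has_real_derivative_iff_has_vector_derivative[symmetric])
  then show ?case by simp
qed

lemma poly_higher_pderiv_mult: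
  "poly ((pderiv ^^ n) (p * q)) (y :: real) =
     (\<Sum>i\<le>n. of_nat (n choose i) * poly ((pderiv ^^ i) p) y * poly ((pderiv ^^ (n - i)) q) y)"
proof -
  have "poly ((pderiv ^^ n) (p * q)) y = nderiv n (\<lambda>w. poly p w * poly q w) y"
    by (simp add: nderiv_poly[symmetric] poly_mult[abs_def] del: nderiv.simps)
  also have "\<dots> = (\<Sum>i\<le>n. of_nat (n choose i) * nderiv i (poly p) y * nderiv (n - i) (poly q) y)"
    by (rule nderiv_mult[of UNIV]) (auto simp: nderiv_poly simp del: nderiv.simps)
  finally show ?thesis by (simp add: nderiv_poly del: nderiv.simps)
qed

lemma DERIV_poly_divide_power:
  assumes "poly q y \<noteq> 0"
  shows "((\<lambda>w. poly p w / poly q w ^ Suc k) has_real_derivative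
           poly (pderiv p * q - smult (of_nat (Suc k)) (p * pderiv q)) y / poly q y ^ Suc (Suc k))
         (at y)"
proof -
  have "(poly (pderiv p) y * poly q y ^ Suc k - poly p y * (of_nat (Suc k) * poly q y ^ k * poly (pderiv q) y))
        / (poly q y ^ Suc k * poly q y ^ Suc k)
      = poly (pderiv p * q - smult (of_nat (Suc k)) (p * pderiv q)) y / poly q y ^ Suc (Suc k)"
    using assms by (simp add: field_simps)
  then show ?thesis
    using DERIV_divide[OF poly_DERIV[of p y] DERIV_power_Suc[OF poly_DERIV[of q y], of k]] assms
    by (simp add: algebra_simps)
qed

lemma nderiv_inverse_poly:
  assumes U: "open U" and q: "\<And>y. y \<in> U \<Longrightarrow> poly q y \<noteq> 0"
  shows "\<exists>p. \<forall>y\<in>U. nderiv k (\<lambda>y. inverse (poly q y)) y = poly p y / poly q y ^ Suc k"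
proof (induction k)
  case 0
  show ?case by (rule exI[of _ 1]) (simp add: divide_inverse)
next
  case (Suc k)
  then obtain p where p: "\<And>y. y \<in> U \<Longrightarrow> nderiv k (\<lambda>y. inverse (poly q y)) y = poly p y / poly q y ^ Suc k"
    by blast
  have "nderiv (Suc k) (\<lambda>y. inverse (poly q y)) y =
      poly (pderiv p * q - smult (of_nat (Suc k)) (p * pderiv q)) y / poly q y ^ Suc (Suc k)"
    if "y \<in> U" for y
    using has_field_derivative_transform_within_open[OF DERIV_poly_divide_power[OF q[OF that]] U that] p
    by (simp add: vector_derivative_at has_real_derivative_iff_has_vector_derivative[symmetric])
  then show ?case by blast
qed

lemma nderiv_inverse_poly_has_derivative:
  assumes U: "open U" and q: "\<And>y. y \<in> U \<Longrightarrow> poly q y \<noteq> 0" and y: "y \<in> U"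
  shows "(nderiv k (\<lambda>y. inverse (poly q y)) has_real_derivative
           nderiv (Suc k) (\<lambda>y. inverse (poly q y)) y) (at y)"
proof -
  obtain p where p: "\<And>y. y \<in> U \<Longrightarrow> nderiv k (\<lambda>y. inverse (poly q y)) y = poly p y / poly q y ^ Suc k"
    using nderiv_inverse_poly[OF U q] by blast
  have "(nderiv k (\<lambda>y. inverse (poly q y)) has_real_derivative
      poly (pderiv p * q - smult (of_nat (Suc k)) (p * pderiv q)) y / poly q y ^ Suc (Suc k)) (at y)"
    using has_field_derivative_transform_within_open[OF DERIV_poly_divide_power[OF q[OF y]] U y] p by simp
  then show ?thesis
    by (simp add: vector_derivative_at has_real_derivative_iff_has_vector_derivative[symmetric])
qed

subsection \<open>Taylor's formula with integral remainder\<close>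

lemma taylor_sum_has_vector_derivative:
  fixes F :: "nat \<Rightarrow> real \<Rightarrow> 'a::real_normed_vector"
  assumes "1 \<le> p" "\<And>i. i < p \<Longrightarrow> (F i has_vector_derivative F (Suc i) t) (at t within T)"
  shows "((\<lambda>u. \<Sum>i<p. ((y - u) ^ i / fact i) *\<^sub>R F i u) has_vector_derivative
           ((y - t) ^ (p - 1) / fact (p - 1)) *\<^sub>R F p t) (at t within T)"
  using assms
proof (induction p rule: nat_induct_at_least)
  case base
  then show ?case using base.prems[of 0] by simp
next
  case (Suc p)
  have coeff: "((\<lambda>u. (y - u) ^ p / fact p) has_real_derivative - ((y - t) ^ (p - 1) / fact (p - 1)))
      (at t within T)"
  proof -
    have "((\<lambda>u. (y - u) ^ p / fact p) has_real_derivative (of_nat p * (y - t) ^ (p - 1) * (-1)) / fact p)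
        (at t within T)"
      by (auto intro!: derivative_eq_intros)
    moreover have "(of_nat p * (y - t) ^ (p - 1) * (-1)) / fact p = - ((y - t) ^ (p - 1) / fact (p - 1))"
      using Suc(1) by (cases p) (simp_all add: fact_Suc del: of_nat_Suc)
    ultimately show ?thesis by simp
  qed
  have IH: "((\<lambda>u. \<Sum>i<p. ((y - u) ^ i / fact i) *\<^sub>R F i u) has_vector_derivative
      ((y - t) ^ (p - 1) / fact (p - 1)) *\<^sub>R F p t) (at t within T)"
    using Suc by simp
  have "((\<lambda>u. (\<Sum>i<p. ((y - u) ^ i / fact i) *\<^sub>R F i u) + ((y - u) ^ p / fact p) *\<^sub>R F p u)
      has_vector_derivative
      ((y - t) ^ (p - 1) / fact (p - 1)) *\<^sub>R F p t
        + (((y - t) ^ p / fact p) *\<^sub>R F (Suc p) t + (- ((y - t) ^ (p - 1) / fact (p - 1))) *\<^sub>R F p t))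
      (at t within T)"
    by (intro has_vector_derivative_add IH has_vector_derivative_scaleR coeff Suc.prems) simp
  \<comment> \<open>the derivative telescopes\<close>
  then show ?case by (simp add: algebra_simps)
qed

lemma taylor_oint:
  fixes F :: "nat \<Rightarrow> real \<Rightarrow> complex"
  assumes p: "1 \<le> p"
    and F: "\<And>i t. i < p \<Longrightarrow> t \<in> {min x y..max x y} \<Longrightarrow> (F i has_vector_derivative F (Suc i) t) (at t)"
  shows "F 0 y + oint y x (\<lambda>t. F p t * of_real ((y - t) ^ (p - 1) / fact (p - 1)))
          = (\<Sum>i<p. of_real ((y - x) ^ i / fact i) * F i x)"
proof -
  define S where "S u = (\<Sum>i<p. ((y - u) ^ i / fact i) *\<^sub>R F i u)" for u
  define g where "g t = F p t * of_real ((y - t) ^ (p - 1) / fact (p - 1))" for t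
  have "S y = F 0 y"
    unfolding S_def using p by (simp add: lessThan_atLeast0 sum.atLeast_Suc_lessThan sum.neutral)
  have S: "(S has_vector_derivative g t) (at t within {u..v})"
    if "t \<in> {u..v}" "{u..v} \<subseteq> {min x y..max x y}" for t u v
  proof -
    have "(S has_vector_derivative ((y - t) ^ (p - 1) / fact (p - 1)) *\<^sub>R F p t) (at t within {u..v})"
      unfolding S_def
    proof (rule taylor_sum_has_vector_derivative[OF p])
      fix i assume "i < p"
      then show "(F i has_vector_derivative F (Suc i) t) (at t within {u..v})"
        using F[THEN has_vector_derivative_at_within] that by blast
    qed
    then show ?thesis unfolding g_def by (simp add: scaleR_conv_of_real mult.commute)
  qed
  have "oint y x g = S x - S y"
  proof (cases "y \<le> x")
    case True
    have "(g has_integral S x - S y) {y..x}"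
      by (rule fundamental_theorem_of_calculus[OF True S]) (use True in auto)
    then show ?thesis using True unfolding oint_def by (simp add: integral_unique)
  next
    case False
    have "(g has_integral S y - S x) {x..y}"
      by (rule fundamental_theorem_of_calculus[OF _ S]) (use False in auto)
    then show ?thesis using False unfolding oint_def by (simp add: integral_unique)
  qed
  moreover have "S x = (\<Sum>i<p. of_real ((y - x) ^ i / fact i) * F i x)"
    unfolding S_def by (simp only: scaleR_conv_of_real)
  ultimately show ?thesis
    using \<open>S y = F 0 y\<close> unfolding g_def by simp
qed

lemma nderiv_taylor_oint:
  assumes I: "is_interval I" and f: "Cn n I f" and "x \<in> I" "y \<in> I" and \<beta>: "\<beta> < n"
  shows "nderiv \<beta> f y + oint y x (\<lambda>t. nderiv n f t * of_real ((y - t) ^ (n - 1 - \<beta>) / fact (n - 1 - \<beta>)))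
         = (\<Sum>j<n. nderiv j f x / fact j * of_real (poly ((pderiv ^^ \<beta>) ([:-x, 1:] ^ j)) y))"
proof -
  have F: "(nderiv k f has_vector_derivative nderiv (Suc k) f t) (at t)" if "k < n" "t \<in> I" for k t
    using f that unfolding Cn_def by (simp add: vector_derivative_works[symmetric])
  have "min x y \<in> I" "max x y \<in> I"
    using \<open>x \<in> I\<close> \<open>y \<in> I\<close> by (simp_all add: min_def max_def)
  then have sub: "{min x y..max x y} \<subseteq> I"
    using mem_is_interval_1_I[OF I] by (meson atLeastAtMost_iff subsetI)
  have "nderiv (\<beta> + 0) f y + oint y x (\<lambda>t. nderiv (\<beta> + (n - \<beta>)) f t
          * of_real ((y - t) ^ (n - \<beta> - 1) / fact (n - \<beta> - 1)))
      = (\<Sum>i<n - \<beta>. of_real ((y - x) ^ i / fact i) * nderiv (\<beta> + i) f x)"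
  proof (rule taylor_oint[where F = "\<lambda>i. nderiv (\<beta> + i) f"])
    show "1 \<le> n - \<beta>" using \<beta> by simp
    fix i t assume "i < n - \<beta>" "t \<in> {min x y..max x y}"
    then show "(nderiv (\<beta> + i) f has_vector_derivative nderiv (\<beta> + Suc i) f t) (at t)"
      using F[of "\<beta> + i" t] sub by auto
  qed
  also have "\<dots> = (\<Sum>j\<in>{\<beta>..<n}. of_real ((y - x) ^ (j - \<beta>) / fact (j - \<beta>)) * nderiv j f x)"
    by (simp add: sum.atLeastLessThan_shift_0[of _ \<beta>] lessThan_atLeast0)
  also have "\<dots> = (\<Sum>j<n. if \<beta> \<le> j then of_real ((y - x) ^ (j - \<beta>) / fact (j - \<beta>)) * nderiv j f x else 0)"
    by (simp add: sum.If_cases) (rule sum.cong, auto)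
  also have "\<dots> = (\<Sum>j<n. nderiv j f x / fact j * of_real (poly ((pderiv ^^ \<beta>) ([:-x, 1:] ^ j)) y))"
    by (intro sum.cong refl) (simp add: poly_higher_pderiv_linear_power field_simps del: funpow.simps)
  finally show ?thesis using \<beta> by (simp add: add.commute)
qed

subsection \<open>The Hermite basis\<close>

text \<open>In the notation of the paper, \<open>cofactor_poly l a m \<alpha>\<close> is \<open>\<omega>(x) / (x - a\<^sub>\<alpha>)^n\<^sub>\<alpha>\<close>, whose
  reciprocal is \<open>g\<^sub>\<alpha>\<close>, and \<open>hermite_taylor_poly l a m \<alpha> \<beta>\<close> is the Taylor polynomial of \<open>g\<^sub>\<alpha>\<close> at \<open>a\<^sub>\<alpha>\<close>
  of degree \<open>n\<^sub>\<alpha> - 1 - \<beta>\<close>.\<close>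

definition cofactor_poly :: "nat \<Rightarrow> (nat \<Rightarrow> real) \<Rightarrow> (nat \<Rightarrow> nat) \<Rightarrow> nat \<Rightarrow> real poly" where
  "cofactor_poly l a m \<alpha> = (\<Prod>i\<in>{1..l}-{\<alpha>}. [:-a i, 1:] ^ m i)"

definition hermite_taylor_poly :: "nat \<Rightarrow> (nat \<Rightarrow> real) \<Rightarrow> (nat \<Rightarrow> nat) \<Rightarrow> nat \<Rightarrow> nat \<Rightarrow> real poly" where
  "hermite_taylor_poly l a m \<alpha> \<beta> =
     (\<Sum>k=0..m \<alpha> - 1 - \<beta>. smult (nderiv k (gfun l a m \<alpha>) (a \<alpha>) / fact k) ([:-a \<alpha>, 1:] ^ k))"

definition hermite_poly :: "nat \<Rightarrow> (nat \<Rightarrow> real) \<Rightarrow> (nat \<Rightarrow> nat) \<Rightarrow> nat \<Rightarrow> nat \<Rightarrow> real poly" where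
  "hermite_poly l a m \<alpha> \<beta> =
     smult (1 / fact \<beta>) ([:-a \<alpha>, 1:] ^ \<beta> * (hermite_taylor_poly l a m \<alpha> \<beta> * cofactor_poly l a m \<alpha>))"

lemma gfun_eq_inverse_cofactor_poly: "gfun l a m \<alpha> = (\<lambda>y. inverse (poly (cofactor_poly l a m \<alpha>) y))"
  unfolding gfun_def cofactor_poly_def
  by (rule ext) (simp add: poly_prod poly_power prod_inversef[symmetric] o_def)

lemma poly_hermite_poly: "poly (hermite_poly l a m \<alpha> \<beta>) x = Hpoly l a m \<alpha> \<beta> x"
  unfolding hermite_poly_def Hpoly_def hermite_taylor_poly_def cofactor_poly_def
  by (simp add: poly_sum poly_prod poly_power sum_distrib_left sum_distrib_right power_add
      divide_simps mult_ac)

lemma degree_cofactor_poly: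
  assumes "\<alpha> \<in> {1..l}"
  shows "degree (cofactor_poly l a m \<alpha>) = (\<Sum>i\<in>{1..l}. m i) - m \<alpha>"
proof -
  have "degree (cofactor_poly l a m \<alpha>) = (\<Sum>i\<in>{1..l}-{\<alpha>}. m i)"
    unfolding cofactor_poly_def by (subst degree_prod_sum_eq) (auto simp: degree_linear_power)
  moreover have "(\<Sum>i\<in>{1..l}. m i) = m \<alpha> + (\<Sum>i\<in>{1..l}-{\<alpha>}. m i)"
    using assms by (simp add: sum.remove)
  ultimately show ?thesis by simp
qed

lemma degree_hermite_taylor_poly: "degree (hermite_taylor_poly l a m \<alpha> \<beta>) \<le> m \<alpha> - 1 - \<beta>"
  unfolding hermite_taylor_poly_def
  by (intro degree_sum_le order_trans[OF degree_smult_le]) (auto simp: degree_linear_power)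

lemma degree_hermite_poly:
  assumes "\<alpha> \<in> {1..l}" "\<beta> < m \<alpha>"
  shows "degree (hermite_poly l a m \<alpha> \<beta>) < (\<Sum>i\<in>{1..l}. m i)"
proof -
  have "m \<alpha> \<le> (\<Sum>i\<in>{1..l}. m i)" using assms(1) by (intro member_le_sum) auto
  moreover have "degree (hermite_poly l a m \<alpha> \<beta>)
      \<le> \<beta> + (degree (hermite_taylor_poly l a m \<alpha> \<beta>) + degree (cofactor_poly l a m \<alpha>))"
    unfolding hermite_poly_def
    by (intro order_trans[OF degree_smult_le] order_trans[OF degree_mult_le] add_mono degree_mult_le)
       (simp_all add: degree_linear_power)
  ultimately show ?thesis
    using assms degree_hermite_taylor_poly[of l a m \<alpha> \<beta>] degree_cofactor_poly[OF assms(1), of a m]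
    by linarith
qed

lemma poly_higher_pderiv_hermite_taylor_poly:
  assumes "j \<le> m \<alpha> - 1 - \<beta>"
  shows "poly ((pderiv ^^ j) (hermite_taylor_poly l a m \<alpha> \<beta>)) (a \<alpha>) = nderiv j (gfun l a m \<alpha>) (a \<alpha>)"
proof -
  have "poly ((pderiv ^^ j) (hermite_taylor_poly l a m \<alpha> \<beta>)) (a \<alpha>) =
      (\<Sum>k=0..m \<alpha> - 1 - \<beta>. nderiv k (gfun l a m \<alpha>) (a \<alpha>) / fact k
         * (if j \<le> k then fact k / fact (k - j) * (a \<alpha> - a \<alpha>) ^ (k - j) else 0))"
    unfolding hermite_taylor_poly_def
    by (simp add: higher_pderiv_sum higher_pderiv_smult poly_sum poly_higher_pderiv_linear_power
        del: funpow.simps nderiv.simps)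
  also have "\<dots> = (\<Sum>k=0..m \<alpha> - 1 - \<beta>. if k = j then nderiv j (gfun l a m \<alpha>) (a \<alpha>) else 0)"
    by (rule sum.cong) auto
  finally show ?thesis using assms by simp
qed

context
  fixes l :: nat and a :: "nat \<Rightarrow> real" and m :: "nat \<Rightarrow> nat"
  assumes a_inj: "inj_on a {1..l}"
begin

lemma leibniz_gfun_cofactor_poly:
  assumes \<alpha>: "\<alpha> \<in> {1..l}"
  shows "(\<Sum>k\<le>j. of_nat (j choose k) * nderiv k (gfun l a m \<alpha>) (a \<alpha>)
                   * poly ((pderiv ^^ (j - k)) (cofactor_poly l a m \<alpha>)) (a \<alpha>))
         = (if j = 0 then 1 else 0)"
proof -
  define U where "U = - (a ` ({1..l} - {\<alpha>}))"
  have U: "open U" unfolding U_def by (intro open_Compl finite_imp_closed) auto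
  have aU: "a \<alpha> \<in> U" unfolding U_def using a_inj \<alpha> by (auto dest: inj_onD)
  have G: "poly (cofactor_poly l a m \<alpha>) y \<noteq> 0" if "y \<in> U" for y
    using that unfolding U_def cofactor_poly_def by (auto simp: poly_prod poly_power)
  have "nderiv j (\<lambda>w. gfun l a m \<alpha> w * poly (cofactor_poly l a m \<alpha>) w) (a \<alpha>) =
     (\<Sum>k\<le>j. of_nat (j choose k) * nderiv k (gfun l a m \<alpha>) (a \<alpha>)
                * nderiv (j - k) (poly (cofactor_poly l a m \<alpha>)) (a \<alpha>))"
    unfolding gfun_eq_inverse_cofactor_poly
    by (rule nderiv_mult[OF U nderiv_inverse_poly_has_derivative[OF U G] _ aU])
       (auto simp: nderiv_poly simp del: nderiv.simps)
  moreover have "nderiv j (\<lambda>w. gfun l a m \<alpha> w * poly (cofactor_poly l a m \<alpha>) w) (a \<alpha>)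
      = nderiv j (\<lambda>_. 1::real) (a \<alpha>)"
    by (rule nderiv_cong_open[OF U _ aU]) (simp add: gfun_eq_inverse_cofactor_poly G)
  ultimately show ?thesis by (simp add: nderiv_const nderiv_poly del: nderiv.simps)
qed

lemma poly_higher_pderiv_hermite_taylor_poly_mult_cofactor_poly:
  assumes "\<alpha> \<in> {1..l}" "j < m \<alpha> - \<beta>"
  shows "poly ((pderiv ^^ j) (hermite_taylor_poly l a m \<alpha> \<beta> * cofactor_poly l a m \<alpha>)) (a \<alpha>)
           = (if j = 0 then 1 else 0)"
  unfolding poly_higher_pderiv_mult leibniz_gfun_cofactor_poly[OF assms(1), symmetric]
  using assms(2) by (intro sum.cong refl) (simp add: poly_higher_pderiv_hermite_taylor_poly del: funpow.simps)

lemma poly_higher_pderiv_hermite_poly: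
  assumes \<alpha>: "\<alpha> \<in> {1..l}" and i: "i \<in> {1..l}" and \<beta>: "\<beta> < m \<alpha>" and j: "j < m i"
  shows "poly ((pderiv ^^ j) (hermite_poly l a m \<alpha> \<beta>)) (a i) = (if i = \<alpha> \<and> j = \<beta> then 1 else 0)"
proof (cases "i = \<alpha>")
  case False
  have "[:-a i, 1:] ^ m i dvd cofactor_poly l a m \<alpha>"
    unfolding cofactor_poly_def using False i by (intro dvd_prodI) auto
  then have "[:-a i, 1:] ^ m i dvd hermite_poly l a m \<alpha> \<beta>"
    unfolding hermite_poly_def by (intro dvd_smult dvd_mult)
  then show ?thesis using poly_higher_pderiv_eq_0_if_linear_power_dvd j False by auto
next
  case True
  define q where "q = [:-a \<alpha>, 1:]"
  \<comment> \<open>\<open>T\<close> is the Taylor polynomial of \<open>1/G\<close> at \<open>a\<^sub>\<alpha>\<close>, so \<open>T G - 1\<close> vanishes there to order \<open>n\<^sub>\<alpha> - \<beta>\<close>.\<close>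
  have "q ^ (m \<alpha> - \<beta>) dvd hermite_taylor_poly l a m \<alpha> \<beta> * cofactor_poly l a m \<alpha> - 1"
    unfolding q_def
  proof (intro linear_power_dvd_if_poly_higher_pderiv_eq_0)
    fix j assume "j < m \<alpha> - \<beta>"
    then show "poly ((pderiv ^^ j) (hermite_taylor_poly l a m \<alpha> \<beta> * cofactor_poly l a m \<alpha> - 1)) (a \<alpha>) = 0"
      by (simp only: higher_pderiv_diff poly_diff higher_pderiv_1
          poly_higher_pderiv_hermite_taylor_poly_mult_cofactor_poly[OF \<alpha>]) simp
  qed
  then obtain r where "hermite_taylor_poly l a m \<alpha> \<beta> * cofactor_poly l a m \<alpha> = q ^ (m \<alpha> - \<beta>) * r + 1"
    by (metis dvdE diff_eq_eq)
  then have "q ^ \<beta> * (hermite_taylor_poly l a m \<alpha> \<beta> * cofactor_poly l a m \<alpha>) = q ^ \<beta> + q ^ m \<alpha> * r"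
    using \<beta> by (simp add: algebra_simps power_add[symmetric])
  then have "hermite_poly l a m \<alpha> \<beta> = smult (1 / fact \<beta>) (q ^ \<beta> + q ^ m \<alpha> * r)"
    unfolding hermite_poly_def q_def by simp
  moreover have "poly ((pderiv ^^ j) (q ^ m \<alpha> * r)) (a \<alpha>) = 0"
    unfolding q_def by (rule poly_higher_pderiv_eq_0_if_linear_power_dvd) (use j True in auto)
  ultimately show ?thesis
    using True by (simp add: higher_pderiv_smult higher_pderiv_add q_def poly_higher_pderiv_linear_power
        del: funpow.simps)
qed

lemma hermite_interpolation:
  fixes p :: "real poly"
  assumes m: "\<And>i. i \<in> {1..l} \<Longrightarrow> 1 \<le> m i"
    and deg: "degree p < (\<Sum>i\<in>{1..l}. m i)"
  shows "poly p x = (\<Sum>\<alpha>=1..l. \<Sum>\<beta>=0..m \<alpha> - 1. poly ((pderiv ^^ \<beta>) p) (a \<alpha>) * Hpoly l a m \<alpha> \<beta> x)"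
proof -
  define S where
    "S = (\<Sum>\<alpha>=1..l. \<Sum>\<beta>=0..m \<alpha> - 1. smult (poly ((pderiv ^^ \<beta>) p) (a \<alpha>)) (hermite_poly l a m \<alpha> \<beta>))"
  have \<beta>: "\<beta> < m \<alpha>" if "\<alpha> \<in> {1..l}" "\<beta> \<in> {0..m \<alpha> - 1}" for \<alpha> \<beta>
    using m that by fastforce
  have "p - S = 0"
  proof (rule eq_0_if_poly_higher_pderiv_eq_0[OF _ a_inj])
    have "degree S < (\<Sum>i\<in>{1..l}. m i)"
      unfolding S_def
      by (intro degree_sum_less le_less_trans[OF degree_smult_le] degree_hermite_poly \<beta>)
         (use deg in auto)
    then show "degree (p - S) < (\<Sum>i\<in>{1..l}. m i)"
      using deg degree_diff_le_max[of p S] by linarith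
    fix i j assume i: "i \<in> {1..l}" and j: "j < m i"
    have "poly ((pderiv ^^ j) S) (a i) =
        (\<Sum>\<alpha>=1..l. \<Sum>\<beta>=0..m \<alpha> - 1. if \<alpha> = i \<and> \<beta> = j then poly ((pderiv ^^ \<beta>) p) (a \<alpha>) else 0)"
      unfolding S_def higher_pderiv_sum higher_pderiv_smult poly_sum poly_smult
      by (intro sum.cong refl) (simp add: poly_higher_pderiv_hermite_poly[OF _ i \<beta> j] del: funpow.simps)
    also have "\<dots> = (\<Sum>\<alpha>=1..l. if \<alpha> = i then poly ((pderiv ^^ j) p) (a i) else 0)"
      using j by (intro sum.cong refl) auto
    also have "\<dots> = poly ((pderiv ^^ j) p) (a i)"
      using i by simp
    finally show "poly ((pderiv ^^ j) (p - S)) (a i) = 0"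
      by (simp add: higher_pderiv_diff del: funpow.simps)
  qed simp
  then have "poly p x = poly S x" by simp
  then show ?thesis
    unfolding S_def poly_sum poly_smult poly_hermite_poly .
qed

lemma hermite_interpolation_linear_power:
  assumes "\<And>i. i \<in> {1..l} \<Longrightarrow> 1 \<le> m i" and "j < (\<Sum>i\<in>{1..l}. m i)"
  shows "(\<Sum>\<alpha>=1..l. \<Sum>\<beta>=0..m \<alpha> - 1. poly ((pderiv ^^ \<beta>) ([:-x, 1:] ^ j)) (a \<alpha>) * Hpoly l a m \<alpha> \<beta> x)
         = (if j = 0 then 1 else 0)"
proof -
  have "poly ([:-x, 1:] ^ j) x
      = (\<Sum>\<alpha>=1..l. \<Sum>\<beta>=0..m \<alpha> - 1. poly ((pderiv ^^ \<beta>) ([:-x, 1:] ^ j)) (a \<alpha>) * Hpoly l a m \<alpha> \<beta> x)"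
    using assms by (intro hermite_interpolation) (auto simp: degree_linear_power)
  then show ?thesis by (simp add: poly_power power_0_left)
qed

end

theorem mainTheorem5:
  fixes l n :: nat and I :: "real set" and a :: "nat \<Rightarrow> real" and m :: "nat \<Rightarrow> nat"
    and f :: "real \<Rightarrow> complex" and x :: real
  assumes "open I" and "is_interval I"
    and "1 \<le> l"
    and "\<And>i j. 1 \<le> i \<Longrightarrow> i < j \<Longrightarrow> j \<le> l \<Longrightarrow> a i < a j"
    and "\<And>i. 1 \<le> i \<Longrightarrow> i \<le> l \<Longrightarrow> a i \<in> I"
    and "\<And>i. 1 \<le> i \<Longrightarrow> i \<le> l \<Longrightarrow> 1 \<le> m i"
    and "(\<Sum>i=1..l. m i) = n"
    and "Cn n I f"
    and "x \<in> I"
  shows "f x = (\<Sum>\<alpha>=1..l. \<Sum>\<beta>=0..m \<alpha> - 1.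
            (nderiv \<beta> f (a \<alpha>)
             + oint (a \<alpha>) x (\<lambda>t. nderiv n f t
                 * of_real ((a \<alpha> - t) ^ (n - 1 - \<beta>) / fact (n - 1 - \<beta>))))
            * of_real (Hpoly l a m \<alpha> \<beta> x))"
proof -
  have "strict_mono_on {1..l} a" using assms(4) by (auto intro: strict_mono_onI)
  then have inj: "inj_on a {1..l}" by (rule strict_mono_on_imp_inj_on)
  have m_le: "m \<alpha> \<le> n" if "\<alpha> \<in> {1..l}" for \<alpha>
    using member_le_sum[of \<alpha> "{1..l}" m] that assms(7) by simp
  have "1 \<le> n" using m_le[of 1] assms(3,6) by force
  define c where "c j \<alpha> \<beta> = poly ((pderiv ^^ \<beta>) ([:-x, 1:] ^ j)) (a \<alpha>)" for j \<alpha> \<beta>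
  have taylor: "nderiv \<beta> f (a \<alpha>) + oint (a \<alpha>) x (\<lambda>t. nderiv n f t
                  * of_real ((a \<alpha> - t) ^ (n - 1 - \<beta>) / fact (n - 1 - \<beta>)))
      = (\<Sum>j<n. nderiv j f x / fact j * of_real (c j \<alpha> \<beta>))"
    if "\<alpha> \<in> {1..l}" "\<beta> \<in> {0..m \<alpha> - 1}" for \<alpha> \<beta>
    unfolding c_def using that assms(5,6) m_le[OF that(1)]
    by (intro nderiv_taylor_oint[OF assms(2,8,9)]) force+
  have hermite: "(\<Sum>\<alpha>=1..l. \<Sum>\<beta>=0..m \<alpha> - 1. c j \<alpha> \<beta> * Hpoly l a m \<alpha> \<beta> x) = (if j = 0 then 1 else 0)"
    if "j < n" for j
    unfolding c_def using that assms(6,7) by (intro hermite_interpolation_linear_power[OF inj]) auto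
  have "(\<Sum>\<alpha>=1..l. \<Sum>\<beta>=0..m \<alpha> - 1. (nderiv \<beta> f (a \<alpha>) + oint (a \<alpha>) x (\<lambda>t. nderiv n f t
          * of_real ((a \<alpha> - t) ^ (n - 1 - \<beta>) / fact (n - 1 - \<beta>)))) * of_real (Hpoly l a m \<alpha> \<beta> x))
      = (\<Sum>\<alpha>=1..l. \<Sum>\<beta>=0..m \<alpha> - 1. \<Sum>j<n.
           nderiv j f x / fact j * of_real (c j \<alpha> \<beta> * Hpoly l a m \<alpha> \<beta> x))"
    by (intro sum.cong refl) (subst taylor, assumption+, simp add: sum_distrib_right mult.assoc)
  also have "\<dots> = (\<Sum>j<n. nderiv j f x / fact j
           * of_real (\<Sum>\<alpha>=1..l. \<Sum>\<beta>=0..m \<alpha> - 1. c j \<alpha> \<beta> * Hpoly l a m \<alpha> \<beta> x))"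
    by (subst sum.swap) (simp add: sum.swap[of _ "{..<n}"] sum_distrib_left)
  also have "\<dots> = (\<Sum>j<n. if j = 0 then f x else 0)"
    by (intro sum.cong refl) (simp only: lessThan_iff hermite, simp)
  also have "\<dots> = f x"
    using \<open>1 \<le> n\<close> by simp
  finally show ?thesis ..
qed

end
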